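(* Let $\mathbb R^d$ be endowed with the Euclidean norm $\|\cdot\|$ and denote by $|K|$ the Lebesgue measure of a Borel set $K\subset\mathbb R^d$. Let $A$ be a $d\times d$ real matrix which is unipotent, i.e. $(\mathrm{id}-A)^d=0$. For every integer $n\geq 2$, let $$\mathcal W_n=\{\xi\in\mathbb R^d: \|A^k\xi\|\leq 1\text{ for }1\leq k<n\}.$$ Let $p=\sum_{k=1}^{d-1}\dim\bigl(\mathrm{range}((\mathrm{id}-A)^k)\bigr)$. Then there exist positive constants $C$ and $C'$ (depending on $d$ and $A$) such that $$Cn^{-p}\leq |\mathcal W_n|\leq C'n^{-p}$$ for every $n\geq 2$. *)

theory Defs
  imports "HOL-Analysis.Analysis"
begin

fun matpow :: "real^'n^'n \<Rightarrow> nat \<Rightarrow> real^'n^'n" where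
  "matpow A 0 = mat 1"
| "matpow A (Suc k) = A ** matpow A k"

definition W_set :: "real^'n^'n \<Rightarrow> nat \<Rightarrow> (real^'n) set" where
  "W_set A n = {\<xi>. \<forall>k. 1 \<le> k \<and> k < n \<longrightarrow> norm (matpow A k *v \<xi>) \<le> 1}"

end

theory Submission
  imports Defs "HOL-Computational_Algebra.Polynomial" "HOL-Library.Countable"
begin

text \<open>The matrix \<open>N = 1 - A\<close> is nilpotent. Choose a basis \<open>e\<close> adapted to the flag of kernels
  of its powers, with weights \<open>\<omega> i\<close> such that \<open>N^(\<omega> i + 1)\<close> kills \<open>e i\<close> and the kernel of
  \<open>N^j\<close> is spanned by the basis vectors of weight less than \<open>j\<close>; then \<open>p = \<Sum>i. \<omega> i\<close>.
  In the coordinates \<open>\<xi> = \<Sum>i. \<eta> i n^-\<omega> i e i\<close>, the set \<open>W_n\<close> contains a fixed ball and, for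
  large \<open>n\<close>, is contained in a fixed ball. The first inclusion follows from the binomial expansion
  \<open>A^k = \<Sum>j. (-1)^j (k choose j) N^j\<close>. For the second, \<open>k \<mapsto> A^k \<xi>\<close> is a polynomial of
  degree less than \<open>d\<close> in \<open>k\<close>, bounded at \<open>k = 1, \<dots>, n - 1\<close>, which forces
  \<open>N^j \<xi> = O(n^-j)\<close>; the flag structure turns this into a bound on \<open>\<eta>\<close>. Since the
  change of coordinates scales volumes by a constant times \<open>n^-p\<close>, the bounds follow for
  large \<open>n\<close>, and for the finitely many remaining \<open>n\<close> by monotonicity of \<open>W_n\<close>.\<close>

lemma matpow_add: "matpow A (i + j) = matpow A i ** matpow A j"
  by (induction i) (simp_all add: matrix_mul_assoc)

lemma matpow_add_mult: "matpow A (i + j) *v x = matpow A i *v (matpow A j *v x)"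
  by (simp add: matpow_add matrix_vector_mul_assoc)

lemma matpow_eq_0_ge:
  assumes "matpow N d = 0" and "d \<le> j"
  shows "matpow N j = 0"
  using matpow_add[of N "j - d" d] assms by simp

lemma matpow_diff_binomial:
  "matpow (mat 1 - N) k *v x = (\<Sum>j\<le>k. ((-1)^j * real (k choose j)) *\<^sub>R (matpow N j *v x))"
proof (induction k)
  case 0
  then show ?case by simp
next
  case (Suc k)
  let ?t = "\<lambda>m j. ((-1)^j * real (m choose j)) *\<^sub>R (matpow N j *v x)"
  have "matpow (mat 1 - N) (Suc k) *v x = (mat 1 - N) *v (matpow (mat 1 - N) k *v x)"
    by (simp add: matrix_vector_mul_assoc[symmetric])
  also have "\<dots> = (\<Sum>j\<le>k. ?t k j) - (\<Sum>j\<le>k. ((-1)^j * real (k choose j)) *\<^sub>R (matpow N (Suc j) *v x))"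
    by (simp add: Suc matrix_vector_mult_diff_rdistrib linear_sum[OF matrix_vector_mul_linear]
        matrix_vector_mult_scaleR matrix_vector_mul_assoc[symmetric] scaleR_diff_right sum_subtractf)
  also have "\<dots> = (\<Sum>j\<le>Suc k. ?t (Suc k) j)"
  proof -
    have "(\<Sum>j\<le>Suc k. ?t (Suc k) j)
        = x + (\<Sum>j\<le>k. ((-1)^(Suc j) * real (Suc k choose Suc j)) *\<^sub>R (matpow N (Suc j) *v x))"
      by (subst sum.atMost_Suc_shift) simp
    moreover have "(\<Sum>j\<le>k. ?t k j)
        = x + (\<Sum>j<k. ((-1)^(Suc j) * real (k choose Suc j)) *\<^sub>R (matpow N (Suc j) *v x))"
      by (simp only: lessThan_Suc_atMost[symmetric] sum.lessThan_Suc_shift) simp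
    moreover have "(\<Sum>j<k. ((-1)^(Suc j) * real (k choose Suc j)) *\<^sub>R (matpow N (Suc j) *v x))
        = (\<Sum>j\<le>k. ((-1)^(Suc j) * real (k choose Suc j)) *\<^sub>R (matpow N (Suc j) *v x))"
      by (simp add: lessThan_Suc_atMost[symmetric])
    ultimately show ?thesis
      by (simp add: algebra_simps sum_subtractf[symmetric] scaleR_diff_left[symmetric]
          sum.distrib[symmetric])
  qed
  finally show ?case .
qed

lemma matpow_unipotent_expansion:
  fixes N :: "real^'n^'n"
  assumes "matpow N d = 0"
  shows "matpow (mat 1 - N) k *v x = (\<Sum>j<d. ((-1)^j * real (k choose j)) *\<^sub>R (matpow N j *v x))"
proof -
  have "matpow (mat 1 - N) k *v x = (\<Sum>j<Suc k + d. ((-1)^j * real (k choose j)) *\<^sub>R (matpow N j *v x))"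
    unfolding matpow_diff_binomial by (rule sum.mono_neutral_left) auto
  also have "\<dots> = (\<Sum>j<d. ((-1)^j * real (k choose j)) *\<^sub>R (matpow N j *v x))"
    using matpow_eq_0_ge[OF assms] by (intro sum.mono_neutral_right) auto
  finally show ?thesis .
qed

section \<open>Sampling binomial sums at the integers\<close>

lemma lagrange_basis:
  fixes t :: "nat \<Rightarrow> 'a::field"
  assumes "inj_on t {..<d}"
  obtains lg where "\<And>i. i < d \<Longrightarrow> degree (lg i) < d"
    and "\<And>i m. i < d \<Longrightarrow> m < d \<Longrightarrow> poly (lg i) (t m) = (if m = i then 1 else 0)"
proof
  define lg where
    "lg i = smult (1 / (\<Prod>l\<in>{..<d}-{i}. t i - t l)) (\<Prod>l\<in>{..<d}-{i}. [:- t l, 1:])" for i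
  show "degree (lg i) < d" if "i < d" for i
  proof -
    have "degree (lg i) \<le> degree (\<Prod>l\<in>{..<d}-{i}. [:- t l, 1:])"
      unfolding lg_def by (rule degree_smult_le)
    also have "\<dots> \<le> sum (degree \<circ> (\<lambda>l. [:- t l, 1:])) ({..<d}-{i})"
      by (rule degree_prod_sum_le) simp
    also have "\<dots> < d" using that by simp
    finally show ?thesis .
  qed
  show "poly (lg i) (t m) = (if m = i then 1 else 0)" if "i < d" "m < d" for i m
  proof (cases "m = i")
    case True
    have "(\<Prod>l\<in>{..<d}-{i}. t i - t l) \<noteq> 0"
      using assms that by (auto simp: inj_on_def)
    then show ?thesis using True by (simp add: lg_def poly_prod)
  next
    case False
    have "(\<Prod>l\<in>{..<d}-{i}. poly [:- t l, 1:] (t m)) = 0"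
      using False that by (intro prod_zero) auto
    then show ?thesis using False by (simp add: lg_def poly_prod)
  qed
qed

lemma coeff_bounded_by_values:
  fixes t :: "nat \<Rightarrow> real"
  assumes "inj_on t {..<d}"
  obtains G where "G \<ge> 0"
    and "\<And>q j. degree q < d \<Longrightarrow> \<bar>coeff q j\<bar> \<le> G * (\<Sum>i<d. \<bar>poly q (t i)\<bar>)"
proof -
  obtain lg where deg_lg: "\<And>i. i < d \<Longrightarrow> degree (lg i) < d"
    and poly_lg: "\<And>i m. i < d \<Longrightarrow> m < d \<Longrightarrow> poly (lg i) (t m) = (if m = i then 1 else 0)"
    using lagrange_basis[OF assms] by blast
  define G where "G = (\<Sum>i<d. \<Sum>j<d. \<bar>coeff (lg i) j\<bar>)"
  have coeff_lg: "\<bar>coeff (lg i) j\<bar> \<le> G" if "i < d" for i j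
  proof (cases "j < d")
    case True
    have "\<bar>coeff (lg i) j\<bar> \<le> (\<Sum>j<d. \<bar>coeff (lg i) j\<bar>)"
      using True by (intro member_le_sum) auto
    also have "\<dots> \<le> G" unfolding G_def using that
      by (intro member_le_sum[where f="\<lambda>i. \<Sum>j<d. \<bar>coeff (lg i) j\<bar>"]) (auto intro: sum_nonneg)
    finally show ?thesis .
  next
    case False
    then show ?thesis
      using deg_lg[OF that] by (simp add: coeff_eq_0 G_def sum_nonneg)
  qed
  have interpolation: "q = (\<Sum>i<d. smult (poly q (t i)) (lg i))" if "degree q < d" for q
  proof (rule poly_eqI_degree[where A="t ` {..<d}"])
    fix x assume "x \<in> t ` {..<d}"
    then obtain m where m: "m < d" "x = t m" by auto
    have "poly (\<Sum>i<d. smult (poly q (t i)) (lg i)) x = (\<Sum>i<d. poly q (t i) * (if m = i then 1 else 0))"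
      using m poly_lg by (auto simp: poly_sum intro!: sum.cong)
    also have "\<dots> = poly q x"
      using m by (simp add: if_distrib[of "\<lambda>z. _ * z"] cong: if_cong)
    finally show "poly q x = poly (\<Sum>i<d. smult (poly q (t i)) (lg i)) x" by simp
  next
    have "degree (\<Sum>i<d. smult (poly q (t i)) (lg i)) < d"
      using that deg_lg
      by (intro degree_sum_less) (auto intro: le_less_trans[OF degree_smult_le])
    then show "degree (\<Sum>i<d. smult (poly q (t i)) (lg i)) < card (t ` {..<d})"
      using card_image[OF assms] by simp
  qed (use that card_image[OF assms] in simp)
  show ?thesis
  proof
    show "G \<ge> 0" unfolding G_def by (auto intro!: sum_nonneg)
    fix q :: "real poly" and j assume "degree q < d"
    then have "coeff q j = (\<Sum>i<d. poly q (t i) * coeff (lg i) j)"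
      by (subst interpolation) (simp_all add: coeff_sum)
    also have "\<bar>\<dots>\<bar> \<le> (\<Sum>i<d. \<bar>poly q (t i)\<bar> * G)"
      by (rule order.trans[OF sum_abs]) (auto simp: abs_mult intro!: sum_mono mult_left_mono coeff_lg)
    finally show "\<bar>coeff q j\<bar> \<le> G * (\<Sum>i<d. \<bar>poly q (t i)\<bar>)"
      by (simp add: sum_distrib_left mult.commute)
  qed
qed

lemma binomial_eq_falling_product: "real (k choose j) = (\<Prod>i<j. real k - real i) / fact j"
  by (simp add: binomial_gbinomial gbinomial_prod_rev atLeast0LessThan)

lemma falling_product_approx:
  fixes x :: real
  assumes "0 \<le> x" "x \<le> 1" "j \<le> n"
  shows "\<bar>(\<Prod>i<j. x - real i / real n) - x ^ j\<bar> \<le> real j * real j / real n"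
proof -
  have "\<bar>x - real i / real n\<bar> \<le> 1" if "i < j" for i
  proof -
    have "real i / real n \<le> 1"
      using assms that by (cases "n = 0") (auto simp: field_simps)
    moreover have "0 \<le> real i / real n" by simp
    ultimately show ?thesis using assms by linarith
  qed
  then have "\<bar>(\<Prod>i<j. x - real i / real n) - (\<Prod>i<j. x)\<bar> \<le> (\<Sum>i<j. \<bar>(x - real i / real n) - x\<bar>)"
    using norm_prod_diff[of "{..<j}" "\<lambda>i. x - real i / real n" "\<lambda>i. x"] assms by auto
  also have "\<dots> \<le> (\<Sum>i<j. real j / real n)"
    by (intro sum_mono) (auto simp: divide_right_mono)
  finally show ?thesis by simp
qed

lemma power_diff_le_unit_interval:
  fixes x y :: real
  assumes "0 \<le> x" "x \<le> 1" "0 \<le> y" "y \<le> 1"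
  shows "\<bar>x ^ j - y ^ j\<bar> \<le> real j * \<bar>x - y\<bar>"
  using norm_prod_diff[of "{..<j}" "\<lambda>i. x" "\<lambda>i. y"] assms by auto

lemma sum_weighted_diff_le:
  fixes a f g :: "nat \<Rightarrow> real"
  assumes "\<And>j. j < d \<Longrightarrow> \<bar>f j - g j\<bar> \<le> B"
  shows "\<bar>(\<Sum>j<d. a j * f j) - (\<Sum>j<d. a j * g j)\<bar> \<le> (\<Sum>j<d. \<bar>a j\<bar>) * B"
proof -
  have "\<bar>(\<Sum>j<d. a j * f j) - (\<Sum>j<d. a j * g j)\<bar> = \<bar>\<Sum>j<d. a j * (f j - g j)\<bar>"
    by (simp add: sum_subtractf right_diff_distrib)
  also have "\<dots> \<le> (\<Sum>j<d. \<bar>a j\<bar> * B)"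
    using assms by (intro order.trans[OF sum_abs] sum_mono) (auto simp: abs_mult mult_left_mono)
  finally show ?thesis by (simp add: sum_distrib_right)
qed

lemma grid_point_near:
  fixes t :: real
  assumes "1 \<le> real n * t" "t < 1"
  obtains k where "1 \<le> k" "k < n" "\<bar>t - real k / real n\<bar> \<le> 1 / real n"
proof
  define k where "k = nat \<lfloor>real n * t\<rfloor>"
  have n: "real n > 0" using assms by (cases "n = 0") auto
  have k: "real k \<le> real n * t" "real n * t < real k + 1"
    using assms by (auto simp: k_def)
  show "1 \<le> k" using assms by (simp add: k_def le_nat_iff)
  have "real n * t < real n" using assms n by simp
  then show "k < n" using k by linarith
  have "\<bar>t - real k / real n\<bar> = \<bar>real n * t - real k\<bar> / real n"
    using n by (simp add: field_simps)
  also have "\<dots> \<le> 1 / real n" using k n by (intro divide_right_mono) auto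
  finally show "\<bar>t - real k / real n\<bar> \<le> 1 / real n" .
qed

lemma power_sum_coeff_bound:
  fixes t :: "nat \<Rightarrow> real"
  assumes "inj_on t {..<d}"
  obtains G where "G \<ge> 0" and "\<And>a j. j < d \<Longrightarrow> \<bar>a j\<bar> \<le> G * (\<Sum>i<d. \<bar>\<Sum>l<d. a l * t i ^ l\<bar>)"
proof -
  obtain G where "G \<ge> 0"
    and coeff_le: "\<And>q j. degree q < d \<Longrightarrow> \<bar>coeff q j\<bar> \<le> G * (\<Sum>i<d. \<bar>poly q (t i)\<bar>)"
    using coeff_bounded_by_values[OF assms] by blast
  show ?thesis
  proof (rule that[OF \<open>G \<ge> 0\<close>])
    fix a :: "nat \<Rightarrow> real" and j assume "j < d"
    define F where "F = (\<Sum>l<d. monom (a l) l)"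
    have "degree F < d"
      unfolding F_def using \<open>j < d\<close>
      by (intro degree_sum_less) (auto intro: le_less_trans[OF degree_monom_le])
    moreover have "coeff F j = a j" using \<open>j < d\<close> by (simp add: F_def coeff_sum)
    ultimately show "\<bar>a j\<bar> \<le> G * (\<Sum>i<d. \<bar>\<Sum>l<d. a l * t i ^ l\<bar>)"
      using coeff_le[of F j] by (simp add: F_def poly_sum poly_monom)
  qed
qed

lemma binomial_sum_approx:
  fixes v :: "nat \<Rightarrow> real"
  assumes "d \<le> n" and "k \<le> n"
  shows "\<bar>(\<Sum>j<d. real (k choose j) * v j) - (\<Sum>j<d. real n ^ j * v j / fact j * (real k / real n) ^ j)\<bar>
    \<le> (\<Sum>j<d. \<bar>real n ^ j * v j / fact j\<bar>) * (real d * real d / real n)"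
proof (cases "n = 0")
  case True
  then show ?thesis using assms by simp
next
  case False
  then have n: "real n > 0" by simp
  have "real (k choose j) * v j = real n ^ j * v j / fact j * (\<Prod>i<j. real k / real n - real i / real n)" for j
  proof -
    have "(\<Prod>i<j. real k / real n - real i / real n) = (\<Prod>i<j. real k - real i) / real n ^ j"
      by (simp add: diff_divide_distrib[symmetric] prod_dividef)
    then show ?thesis using n by (simp add: binomial_eq_falling_product)
  qed
  then have sum_eq: "(\<Sum>j<d. real (k choose j) * v j)
      = (\<Sum>j<d. real n ^ j * v j / fact j * (\<Prod>i<j. real k / real n - real i / real n))"
    by simp
  have "\<bar>(\<Prod>i<j. real k / real n - real i / real n) - (real k / real n) ^ j\<bar> \<le> real d * real d / real n"
    if "j < d" for j
  proof -
    have "0 \<le> real k / real n" "real k / real n \<le> 1" "j \<le> n"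
      using assms that n by (auto simp: field_simps)
    then have "\<bar>(\<Prod>i<j. real k / real n - real i / real n) - (real k / real n) ^ j\<bar>
        \<le> real j * real j / real n"
      by (rule falling_product_approx)
    also have "\<dots> \<le> real d * real d / real n"
      using that by (intro divide_right_mono mult_mono) auto
    finally show ?thesis .
  qed
  then show ?thesis unfolding sum_eq by (rule sum_weighted_diff_le)
qed

lemma power_sum_lipschitz:
  fixes a :: "nat \<Rightarrow> real"
  assumes xy: "0 \<le> x" "x \<le> 1" "0 \<le> y" "y \<le> 1"
  shows "\<bar>(\<Sum>j<d. a j * x ^ j) - (\<Sum>j<d. a j * y ^ j)\<bar> \<le> (\<Sum>j<d. \<bar>a j\<bar>) * (real d * \<bar>x - y\<bar>)"
proof (rule sum_weighted_diff_le)
  fix j assume "j < d"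
  have "\<bar>x ^ j - y ^ j\<bar> \<le> real j * \<bar>x - y\<bar>" by (rule power_diff_le_unit_interval[OF xy])
  also have "\<dots> \<le> real d * \<bar>x - y\<bar>" using \<open>j < d\<close> by (intro mult_right_mono) auto
  finally show "\<bar>x ^ j - y ^ j\<bar> \<le> real d * \<bar>x - y\<bar>" .
qed

lemma rescaled_power_sum_bound:
  fixes v :: "nat \<Rightarrow> real"
  assumes samples: "\<forall>k. 1 \<le> k \<and> k < n \<longrightarrow> \<bar>\<Sum>j<d. real (k choose j) * v j\<bar> \<le> 1"
    and "d \<le> n" and "1 \<le> real n * t" and "t < 1"
  shows "\<bar>\<Sum>j<d. real n ^ j * v j / fact j * t ^ j\<bar>
    \<le> 1 + (\<Sum>j<d. \<bar>real n ^ j * v j / fact j\<bar>) * ((real d * real d + real d) / real n)"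
proof -
  define a where "a j = real n ^ j * v j / fact j" for j
  define S where "S = (\<Sum>j<d. \<bar>a j\<bar>)"
  define P where "P x = (\<Sum>j<d. a j * x ^ j)" for x :: real
  obtain k where k: "1 \<le> k" "k < n" "\<bar>t - real k / real n\<bar> \<le> 1 / real n"
    using assms(3,4) by (rule grid_point_near)
  have "0 \<le> t"
  proof (rule ccontr)
    assume "\<not> 0 \<le> t"
    then have "real n * t \<le> 0" by (intro mult_nonneg_nonpos) auto
    then show False using assms(3) by linarith
  qed
  moreover have "0 \<le> real k / real n" "real k / real n \<le> 1" using k by auto
  ultimately have "\<bar>P t - P (real k / real n)\<bar> \<le> S * (real d * \<bar>t - real k / real n\<bar>)"
    unfolding P_def S_def using \<open>t < 1\<close> by (intro power_sum_lipschitz) auto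
  also have "\<dots> \<le> S * (real d * (1 / real n))"
    using k(3) by (intro mult_left_mono) (auto simp: S_def sum_nonneg)
  finally have "\<bar>P t - P (real k / real n)\<bar> \<le> S * (real d * (1 / real n))" .
  moreover have "\<bar>\<Sum>j<d. real (k choose j) * v j\<bar> \<le> 1" using samples k by blast
  moreover have "\<bar>(\<Sum>j<d. real (k choose j) * v j) - P (real k / real n)\<bar> \<le> S * (real d * real d / real n)"
    unfolding P_def S_def a_def using \<open>d \<le> n\<close> \<open>k < n\<close> by (intro binomial_sum_approx) auto
  ultimately have "\<bar>P t\<bar> \<le> 1 + S * (real d * real d / real n) + S * (real d * (1 / real n))"
    by linarith
  then show ?thesis by (simp add: P_def S_def a_def add_divide_distrib distrib_left)
qed

text \<open>Rescaling \<open>a j = n^j v j / j!\<close>, the samples are close to the values of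
  \<open>P x = \<Sum>j<d. a j * x^j\<close> at the points \<open>k/n\<close>, with an error of order \<open>S / n\<close> where
  \<open>S = \<Sum>j<d. \<bar>a j\<bar>\<close>. Evaluating near \<open>d\<close> fixed nodes and inverting the Vandermonde system
  bounds \<open>S\<close> by a constant plus \<open>O(S / n)\<close>, which can be absorbed for large \<open>n\<close>.\<close>

lemma binomial_sum_sampling_bound:
  fixes d :: nat
  shows "\<exists>K n0. \<forall>n\<ge>n0. \<forall>v::nat \<Rightarrow> real.
     (\<forall>k. 1 \<le> k \<and> k < n \<longrightarrow> \<bar>\<Sum>j<d. real (k choose j) * v j\<bar> \<le> 1) \<longrightarrow>
     (\<forall>j<d. \<bar>v j\<bar> \<le> K / real n ^ j)"
proof -
  define t where "t i = real (i + 1) / real (d + 1)" for i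
  have "inj_on t {..<d}" by (auto simp: inj_on_def t_def field_simps)
  then obtain G where "G \<ge> 0"
    and vandermonde: "\<And>a j. j < d \<Longrightarrow> \<bar>a j\<bar> \<le> G * (\<Sum>i<d. \<bar>\<Sum>l<d. a l * t i ^ l\<bar>)"
    by (rule power_sum_coeff_bound) blast
  define M where "M = real d * real d * G"
  define c where "c = real d * real d + real d"
  show ?thesis
  proof (intro exI allI impI)
    fix n and v :: "nat \<Rightarrow> real" and j
    assume n: "d + 1 + nat \<lceil>2 * M * c\<rceil> \<le> n"
      and samples: "\<forall>k. 1 \<le> k \<and> k < n \<longrightarrow> \<bar>\<Sum>j<d. real (k choose j) * v j\<bar> \<le> 1"
      and "j < d"
    have "d + 1 \<le> n" "2 * M * c \<le> real n" using n by linarith+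
    then have n_pos: "real n > 0" by simp
    define a where "a j = real n ^ j * v j / fact j" for j
    define S where "S = (\<Sum>j<d. \<bar>a j\<bar>)"
    define P where "P x = (\<Sum>j<d. a j * x ^ j)" for x :: real
    have "S \<ge> 0" by (simp add: S_def sum_nonneg)
    have P_node: "\<bar>P (t i)\<bar> \<le> 1 + S * c / real n" if "i < d" for i
    proof -
      have "d + 1 \<le> n * (i + 1)" using \<open>d + 1 \<le> n\<close> by (simp add: trans_le_add1)
      then have "real (d + 1) \<le> real n * real (i + 1)" by (metis of_nat_le_iff of_nat_mult)
      then have "1 \<le> real n * t i" "t i < 1"
        using that by (simp_all add: t_def field_simps)
      then show ?thesis
        using rescaled_power_sum_bound[OF samples, of "t i"] \<open>d + 1 \<le> n\<close>
        by (simp add: P_def S_def a_def c_def)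
    qed
    have "\<bar>a j\<bar> \<le> G * (real d * (1 + S * c / real n))" if "j < d" for j
    proof -
      have "\<bar>a j\<bar> \<le> G * (\<Sum>i<d. \<bar>P (t i)\<bar>)"
        using vandermonde[OF that] by (simp add: P_def)
      also have "\<dots> \<le> G * (\<Sum>i<d. 1 + S * c / real n)"
        using P_node \<open>G \<ge> 0\<close> by (intro mult_left_mono sum_mono) auto
      finally show ?thesis by simp
    qed
    then have "S \<le> (\<Sum>j<d. G * (real d * (1 + S * c / real n)))"
      by (subst (1) S_def, intro sum_mono) auto
    also have "\<dots> = M + M * c * S / real n" by (simp add: M_def field_simps)
    finally have "S \<le> M + M * c * S / real n" .
    moreover have "M * c * S / real n \<le> S / 2"
      using mult_right_mono[OF \<open>2 * M * c \<le> real n\<close> \<open>S \<ge> 0\<close>] n_pos by (simp add: field_simps)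
    ultimately have "S \<le> 2 * M" by linarith
    have "\<bar>v j\<bar> * real n ^ j = fact j * \<bar>a j\<bar>"
      by (simp add: a_def abs_mult)
    also have "\<dots> \<le> fact d * S"
      using \<open>j < d\<close> \<open>S \<ge> 0\<close> by (intro mult_mono fact_mono) (auto simp: S_def intro: member_le_sum)
    also have "\<dots> \<le> fact d * (2 * M)" using \<open>S \<le> 2 * M\<close> by simp
    finally show "\<bar>v j\<bar> \<le> fact d * (2 * M) / real n ^ j"
      using n_pos by (simp add: field_simps)
  qed
qed

lemma vector_binomial_sum_sampling_bound:
  "\<exists>K n0. \<forall>n\<ge>n0. \<forall>x::nat \<Rightarrow> real^'n.
     (\<forall>k. 1 \<le> k \<and> k < n \<longrightarrow> norm (\<Sum>j<d. real (k choose j) *\<^sub>R x j) \<le> 1) \<longrightarrow>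
     (\<forall>j<d. norm (x j) \<le> K / real n ^ j)"
proof -
  obtain K n0 where bound: "\<And>n v. n \<ge> n0 \<Longrightarrow>
     \<forall>k. 1 \<le> k \<and> k < n \<longrightarrow> \<bar>\<Sum>j<d. real (k choose j) * v j\<bar> \<le> 1 \<Longrightarrow>
     \<forall>j<d. \<bar>v j\<bar> \<le> K / real n ^ j"
    using binomial_sum_sampling_bound[of d] by blast
  show ?thesis
  proof (intro exI allI impI)
    fix n and x :: "nat \<Rightarrow> real^'n" and j
    assume n: "n0 \<le> n" and "j < d"
      and samples: "\<forall>k. 1 \<le> k \<and> k < n \<longrightarrow> norm (\<Sum>j<d. real (k choose j) *\<^sub>R x j) \<le> 1"
    have "\<bar>x j $ r\<bar> \<le> K / real n ^ j" for r
    proof -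
      have "\<bar>\<Sum>j<d. real (k choose j) * (x j $ r)\<bar> \<le> 1" if "1 \<le> k" "k < n" for k
        using samples that component_le_norm_cart[of "\<Sum>j<d. real (k choose j) *\<^sub>R x j" r]
        by force
      then show ?thesis using bound[OF n, of "\<lambda>j. x j $ r"] \<open>j < d\<close> by blast
    qed
    then have "norm (x j) \<le> (\<Sum>r\<in>(UNIV::'n set). K / real n ^ j)"
      by (intro order.trans[OF norm_le_l1_cart] sum_mono)
    then show "norm (x j) \<le> real CARD('n) * K / real n ^ j" by simp
  qed
qed

section \<open>Lebesgue measure of linear images\<close>

text \<open>The change of variables formula \<open>measure_linear_image\<close> of HOL-Analysis is stated
  for index types carrying a well-order. To apply it to vectors indexed by an arbitrary finite
  type, we transport along a copy of the type that is well-ordered via \<open>to_nat\<close>.\<close>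

typedef 'a ordered_copy = "UNIV :: 'a set"
  morphisms of_ordered_copy to_ordered_copy by simp

instantiation ordered_copy :: (countable) linorder
begin

definition "x \<le> y \<longleftrightarrow> to_nat (of_ordered_copy x) \<le> to_nat (of_ordered_copy y)"
definition "x < y \<longleftrightarrow> to_nat (of_ordered_copy x) < to_nat (of_ordered_copy y)"

instance
  by standard (auto simp: less_eq_ordered_copy_def less_ordered_copy_def of_ordered_copy_inject)

end

instance ordered_copy :: (countable) wellorder
proof
  fix P :: "'a ordered_copy \<Rightarrow> bool" and x
  assume step: "\<And>x. (\<And>y. y < x \<Longrightarrow> P y) \<Longrightarrow> P x"
  show "P x"
    by (induction "to_nat (of_ordered_copy x)" arbitrary: x rule: less_induct)
      (rule step, auto simp: less_ordered_copy_def)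
qed

instance ordered_copy :: (finite) finite
proof
  have "UNIV = to_ordered_copy ` (UNIV :: 'a set)"
    by (rule type_definition.Abs_image[OF type_definition_ordered_copy, symmetric])
  then show "finite (UNIV :: 'a ordered_copy set)" by (metis finite_imageI finite_class.finite_UNIV)
qed

lemma bij_of_ordered_copy: "bij of_ordered_copy"
  by (metis bij_def inj_def of_ordered_copy_inject surj_def to_ordered_copy_inverse UNIV_I)

definition vec_reindex :: "('b::finite \<Rightarrow> 'a::finite) \<Rightarrow> 'c^'a \<Rightarrow> 'c^'b" where
  "vec_reindex g x = (\<chi> i. x $ g i)"

lemma linear_vec_reindex: "linear (vec_reindex g :: real^'a::finite \<Rightarrow> real^'b::finite)"
  by (auto simp: vec_reindex_def linear_iff vec_eq_iff)

lemma vec_reindex_inv: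
  assumes "bij g"
  shows "vec_reindex (inv g) (vec_reindex g x) = x" and "vec_reindex g (vec_reindex (inv g) y) = y"
  using assms by (simp_all add: vec_reindex_def vec_eq_iff bij_is_surj bij_is_inj surj_f_inv_f)

lemma prod_Basis_cart: "(\<Prod>b\<in>(Basis::(real^'n) set). f b) = (\<Prod>i\<in>UNIV. f (axis i 1))"
proof -
  have B: "(Basis::(real^'n) set) = range (\<lambda>i. axis i 1)" by (auto simp: Basis_vec_def)
  have "inj (\<lambda>i::'n. axis i (1::real))" by (simp add: inj_on_def axis_eq_axis)
  then show ?thesis unfolding B by (simp add: prod.reindex)
qed

lemma measure_vec_reindex:
  fixes g :: "'b::finite \<Rightarrow> 'a::finite" and S :: "(real^'a) set"
  assumes g: "bij g" and S: "S \<in> sets borel"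
  shows "(vec_reindex g ` S :: (real^'b) set) \<in> sets borel"
    and "measure lebesgue (vec_reindex g ` S :: (real^'b) set) = measure lebesgue S"
proof -
  define \<Psi> where "\<Psi> = (vec_reindex (inv g) :: real^'b \<Rightarrow> real^'a)"
  have image_eq: "vec_reindex g ` T = \<Psi> -` T" for T :: "(real^'a) set"
  proof
    show "vec_reindex g ` T \<subseteq> \<Psi> -` T"
      using vec_reindex_inv(1)[OF g] by (auto simp: \<Psi>_def)
    show "\<Psi> -` T \<subseteq> vec_reindex g ` T"
      using vec_reindex_inv(2)[OF g] unfolding \<Psi>_def by (metis image_eqI subsetI vimageE)
  qed
  have measurable_\<Psi>: "\<Psi> \<in> borel_measurable borel"
    using linear_vec_reindex unfolding \<Psi>_def
    by (intro borel_measurable_continuous_onI linear_continuous_on) (simp add: linear_linear)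
  have distr_\<Psi>: "distr lborel borel \<Psi> = lborel"
  proof (rule lborel_eqI[symmetric])
    fix l u :: "real^'a"
    assume le: "\<And>b. b \<in> Basis \<Longrightarrow> l \<bullet> b \<le> u \<bullet> b"
    have "\<forall>b\<in>Basis. vec_reindex g l \<bullet> b \<le> vec_reindex g u \<bullet> b"
      using le[of "axis _ 1"] by (auto simp: Basis_vec_def inner_axis vec_reindex_def)
    moreover have "\<Psi> -` box l u = box (vec_reindex g l) (vec_reindex g u)"
      using g by (auto simp: \<Psi>_def vec_reindex_def mem_box_cart bij_is_surj surj_f_inv_f)
        (metis bij_inv_eq_iff g)+
    ultimately have "emeasure (distr lborel borel \<Psi>) (box l u) = (\<Prod>i\<in>UNIV. u $ g i - l $ g i)"
      using measurable_\<Psi>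
      by (simp add: emeasure_distr emeasure_lborel_box_eq prod_Basis_cart inner_axis vec_reindex_def)
    also have "\<dots> = (\<Prod>j\<in>UNIV. u $ j - l $ j)"
      using prod.reindex_bij_betw[of g UNIV UNIV "\<lambda>j. u $ j - l $ j"] g by (simp add: bij_betw_def)
    finally show "emeasure (distr lborel borel \<Psi>) (box l u) = (\<Prod>b\<in>Basis. (u - l) \<bullet> b)"
      by (simp add: prod_Basis_cart inner_axis)
  qed simp
  show "vec_reindex g ` S \<in> sets borel"
    using measurable_sets[OF measurable_\<Psi> S] image_eq by simp
  then have "measure lebesgue (vec_reindex g ` S) = measure (distr lborel borel \<Psi>) S"
    using measurable_\<Psi> S by (simp add: image_eq measure_completion measure_distr)
  also have "\<dots> = measure lebesgue S" using S by (simp add: distr_\<Psi> measure_completion)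
  finally show "measure lebesgue (vec_reindex g ` S :: (real^'b) set) = measure lebesgue S" .
qed

lemma linear_image_measure_scaling:
  fixes f :: "real^'n::finite \<Rightarrow> real^'n"
  assumes f: "linear f" "inj f"
  obtains c where "c > 0" and "\<And>S. compact S \<Longrightarrow> measure lebesgue (f ` S) = c * measure lebesgue S"
proof
  define \<Phi> where "\<Phi> = (vec_reindex of_ordered_copy :: real^'n \<Rightarrow> real^'n ordered_copy)"
  define \<Psi> where "\<Psi> = (vec_reindex (inv of_ordered_copy) :: real^'n ordered_copy \<Rightarrow> real^'n)"
  have \<Psi>\<Phi>: "\<Psi> (\<Phi> x) = x" and \<Phi>\<Psi>: "\<Phi> (\<Psi> y) = y" for x y
    using vec_reindex_inv[OF bij_of_ordered_copy] by (simp_all add: \<Phi>_def \<Psi>_def)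
  define h where "h = \<Phi> \<circ> f \<circ> \<Psi>"
  have "linear h" unfolding h_def \<Phi>_def \<Psi>_def
    by (intro linear_compose f(1) linear_vec_reindex)
  moreover have "inj h" unfolding h_def
    using f by (auto simp: inj_def) (metis \<Phi>\<Psi> \<Psi>\<Phi>)
  ultimately show "\<bar>det (matrix h)\<bar> > 0" by (simp add: det_nz_iff_inj)
  fix S :: "(real^'n) set" assume "compact S"
  have "compact (f ` S)"
    using f \<open>compact S\<close> by (intro compact_continuous_image linear_continuous_on) (simp add: linear_linear)
  have "measure lebesgue (f ` S) = measure lebesgue (\<Phi> ` f ` S)"
    unfolding \<Phi>_def
    by (rule measure_vec_reindex(2)[OF bij_of_ordered_copy borel_compact, symmetric]) fact
  also have "\<Phi> ` f ` S = h ` \<Phi> ` S"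
    by (force simp: h_def image_comp \<Psi>\<Phi>)
  also have "measure lebesgue \<dots> = \<bar>det (matrix h)\<bar> * measure lebesgue (\<Phi> ` S)"
    using \<open>linear h\<close> measure_vec_reindex(1)[OF bij_of_ordered_copy borel_compact[OF \<open>compact S\<close>]]
      \<open>compact S\<close> linear_vec_reindex unfolding \<Phi>_def
    by (intro measure_linear_image lmeasurable_compact compact_continuous_image linear_continuous_on)
      (simp_all add: linear_linear)
  also have "measure lebesgue (\<Phi> ` S) = measure lebesgue S"
    unfolding \<Phi>_def by (rule measure_vec_reindex(2)[OF bij_of_ordered_copy borel_compact]) fact
  finally show "measure lebesgue (f ` S) = \<bar>det (matrix h)\<bar> * measure lebesgue S" .
qed

section \<open>A basis adapted to the kernels of a nilpotent matrix\<close>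

lemma kernel_flag_independent_set:
  fixes N :: "real^'n^'n"
  shows "\<exists>S w. independent S \<and> (\<forall>b\<in>S. matpow N (Suc (w b)) *v b = 0 \<and> w b < m) \<and>
     (\<forall>j\<le>m. {x. matpow N j *v x = 0} \<subseteq> span {b\<in>S. w b < j})"
proof (induction m)
  case 0
  show ?case by (rule exI[of _ "{}"]) (auto simp: dependent_def)
next
  case (Suc m)
  then obtain S w where indep: "independent S" and S: "\<forall>b\<in>S. matpow N (Suc (w b)) *v b = 0 \<and> w b < m"
    and flag: "\<forall>j\<le>m. {x. matpow N j *v x = 0} \<subseteq> span {b\<in>S. w b < j}" by blast
  define K where "K = {x. matpow N (Suc m) *v x = 0}"
  have "matpow N (Suc m) *v b = 0" if "b \<in> S" for b
    using matpow_add_mult[of N "m - w b" "Suc (w b)" b] S that by (simp add: Suc_diff_le less_imp_le)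
  then have "S \<subseteq> K" by (auto simp: K_def)
  then obtain B where "S \<subseteq> B" "B \<subseteq> K" "independent B" "K \<subseteq> span B"
    using maximal_independent_subset_extend[OF _ indep] by metis
  define w' where "w' b = (if b \<in> S then w b else m)" for b
  show ?case
  proof (intro exI conjI ballI allI impI)
    show "independent B" by fact
    fix b assume "b \<in> B"
    then show "matpow N (Suc (w' b)) *v b = 0" "w' b < Suc m"
      using S \<open>B \<subseteq> K\<close> by (auto simp: w'_def K_def less_SucI)
  next
    fix j assume "j \<le> Suc m"
    show "{x. matpow N j *v x = 0} \<subseteq> span {b\<in>B. w' b < j}"
    proof (cases "j \<le> m")
      case True
      have "{b\<in>S. w b < j} \<subseteq> {b\<in>B. w' b < j}" using \<open>S \<subseteq> B\<close> by (auto simp: w'_def)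
      then show ?thesis using flag True by (meson order_trans span_mono)
    next
      case False
      then have "j = Suc m" "{b\<in>B. w' b < j} = B"
        using \<open>j \<le> Suc m\<close> S by (auto simp: w'_def less_SucI)
      then show ?thesis using \<open>K \<subseteq> span B\<close> by (simp add: K_def)
    qed
  qed
qed

lemma kernel_flag_basis:
  fixes N :: "real^'n^'n"
  assumes nilpotent: "matpow N CARD('n) = 0"
  obtains e :: "'n \<Rightarrow> real^'n" and \<omega> :: "'n \<Rightarrow> nat"
  where "inj e" "independent (range e)" "span (range e) = UNIV"
    and "\<And>i. matpow N (Suc (\<omega> i)) *v e i = 0" and "\<And>i. \<omega> i < CARD('n)"
    and "\<And>j. {x. matpow N j *v x = 0} \<subseteq> span (e ` {i. \<omega> i < j})"
proof -
  obtain S w where indep: "independent S" and S: "\<forall>b\<in>S. matpow N (Suc (w b)) *v b = 0 \<and> w b < CARD('n)"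
    and flag: "\<forall>j\<le>CARD('n). {x. matpow N j *v x = 0} \<subseteq> span {b\<in>S. w b < j}"
    using kernel_flag_independent_set[of N "CARD('n)"] by blast
  have "{x. matpow N CARD('n) *v x = 0} = UNIV" using nilpotent by simp
  then have "UNIV \<subseteq> span {b\<in>S. w b < CARD('n)}" using flag by auto
  also have "\<dots> \<subseteq> span S" by (intro span_mono) auto
  finally have span_S: "span S = UNIV" by auto
  have "card S = CARD('n)"
    using dim_span_eq_card_independent[OF indep] span_S by simp
  then have "\<exists>e. bij_betw e (UNIV::'n set) S"
    by (intro finite_same_card_bij) (simp_all add: finiteI_independent[OF indep])
  then obtain e where "bij_betw e (UNIV::'n set) S" by blast
  then have range_e: "range e = S" and "inj e" by (simp_all add: bij_betw_def)
  have w_e: "matpow N (Suc (w (e i))) *v e i = 0" "w (e i) < CARD('n)" for i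
    using S range_e by auto
  show ?thesis
  proof
    show "inj e" "independent (range e)" "span (range e) = UNIV"
      using \<open>inj e\<close> indep span_S range_e by simp_all
    show "matpow N (Suc (w (e i))) *v e i = 0" "w (e i) < CARD('n)" for i
      by (fact w_e)+
    show "{x. matpow N j *v x = 0} \<subseteq> span (e ` {i. w (e i) < j})" for j
    proof (cases "j \<le> CARD('n)")
      case True
      have "e ` {i. w (e i) < j} = {b\<in>S. w b < j}" using range_e by auto
      then show ?thesis using flag True by simp
    next
      case False
      then have "w (e i) < j" for i using w_e(2)[of i] by linarith
      then have "{i. w (e i) < j} = UNIV" by auto
      then have "e ` {i. w (e i) < j} = S" using range_e by simp
      then show ?thesis using span_S by simp
    qed
  qed
qed

lemma unipotent_kernel_trivial:
  assumes "matpow (mat 1 - A) d = 0" and "A *v x = 0"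
  shows "x = 0"
proof -
  have "matpow (mat 1 - A) k *v x = x" for k
    using assms(2) by (induction k) (simp_all add: matrix_vector_mul_assoc[symmetric]
        matrix_vector_mult_diff_rdistrib)
  then show ?thesis using assms(1) by (metis matrix_vector_mult_0)
qed

lemma W_set_antimono: "m \<le> n \<Longrightarrow> W_set A n \<subseteq> W_set A m"
  by (auto simp: W_set_def)

lemma closed_W_set: "closed (W_set (A :: real^'n^'n) n)"
proof -
  have "W_set A n = (\<Inter>k\<in>{k. 1 \<le> k \<and> k < n}. {\<xi>. norm (matpow A k *v \<xi>) \<le> 1})"
    by (auto simp: W_set_def)
  moreover have "closed {\<xi>::real^'n. norm (matpow A k *v \<xi>) \<le> 1}" for k
    by (intro closed_Collect_le continuous_on_norm linear_continuous_on continuous_on_const)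
      (auto simp: linear_linear)
  ultimately show ?thesis by auto
qed

lemma compact_W_set:
  fixes A :: "real^'n^'n"
  assumes "\<And>x. A *v x = 0 \<Longrightarrow> x = 0" and "2 \<le> n"
  shows "compact (W_set A n)"
proof -
  obtain \<gamma> where "\<gamma> > 0" and \<gamma>: "\<And>x. \<gamma> * norm x \<le> norm (A *v x)"
    using injective_imp_isometric[of UNIV "(*v) A"] assms(1)
    by (auto simp: subspace_UNIV linear_linear[symmetric] matrix_vector_mul_linear)
  have "W_set A n \<subseteq> cball 0 (1 / \<gamma>)"
  proof
    fix \<xi> assume "\<xi> \<in> W_set A n"
    then have "norm (A *v \<xi>) \<le> 1"
      using assms(2) by (auto simp: W_set_def dest!: spec[of _ 1])
    then have "\<gamma> * norm \<xi> \<le> 1" using \<gamma>[of \<xi>] by linarith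
    then show "\<xi> \<in> cball 0 (1 / \<gamma>)" using \<open>\<gamma> > 0\<close> by (simp add: field_simps)
  qed
  then show ?thesis
    using closed_W_set bounded_cball bounded_subset compact_eq_bounded_closed by metis
qed

lemma measure_W_set_antimono:
  fixes A :: "real^'n^'n"
  assumes "\<And>x. A *v x = 0 \<Longrightarrow> x = 0" and "2 \<le> m" and "m \<le> n"
  shows "measure lebesgue (W_set A n) \<le> measure lebesgue (W_set A m)"
  using assms by (intro measure_mono_fmeasurable W_set_antimono fmeasurableD lmeasurable_compact
      compact_W_set) auto

lemma power_bounds_from_eventual:
  fixes f :: "nat \<Rightarrow> real" and p :: real
  assumes antimono: "\<And>m n. 2 \<le> m \<Longrightarrow> m \<le> n \<Longrightarrow> f n \<le> f m"
    and "p \<ge> 0" and "a > 0"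
    and eventual: "\<And>n. n1 \<le> n \<Longrightarrow> a * real n powr (- p) \<le> f n \<and> f n \<le> b * real n powr (- p)"
  shows "\<exists>C C'. C > 0 \<and> C' > 0 \<and>
    (\<forall>n\<ge>2. C * real n powr (- p) \<le> f n \<and> f n \<le> C' * real n powr (- p))"
proof -
  define m where "m = max n1 2"
  define C where "C = a * real m powr (- p)"
  define C' where "C' = \<bar>b\<bar> + \<bar>f 2\<bar> * real m powr p + 1"
  have decay_le_1: "real n powr (- p) \<le> 1" if "n \<ge> 1" for n
  proof -
    have "1 \<le> real n powr p" using that \<open>p \<ge> 0\<close> by (intro ge_one_powr_ge_zero) auto
    then show ?thesis by (simp add: powr_minus inverse_le_1_iff)
  qed
  have "C > 0" "C' > 0" using \<open>a > 0\<close> by (simp_all add: C_def C'_def m_def add_nonneg_pos)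
  moreover have "C * real n powr (- p) \<le> f n \<and> f n \<le> C' * real n powr (- p)" if "2 \<le> n" for n
  proof (cases "m \<le> n")
    case True
    then have "n1 \<le> n" by (simp add: m_def)
    have "C \<le> a" using \<open>a > 0\<close> decay_le_1[of m] by (simp add: C_def m_def mult_left_le)
    then have "C * real n powr (- p) \<le> a * real n powr (- p)" by (rule mult_right_mono) simp
    moreover have "b \<le> C'"
    proof -
      have "0 \<le> \<bar>f 2\<bar> * real m powr p" by simp
      then show ?thesis using abs_ge_self[of b] unfolding C'_def by linarith
    qed
    then have "b * real n powr (- p) \<le> C' * real n powr (- p)" by (rule mult_right_mono) simp
    ultimately show ?thesis using eventual[OF \<open>n1 \<le> n\<close>] by linarith
  next
    case False
    have "C * real n powr (- p) \<le> C"
      using decay_le_1[of n] \<open>2 \<le> n\<close> \<open>a > 0\<close> by (simp add: C_def mult_left_le)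
    also have "C \<le> f m" using eventual[of m] by (simp add: C_def m_def)
    also have "f m \<le> f n" using False \<open>2 \<le> n\<close> by (intro antimono) auto
    finally have lower: "C * real n powr (- p) \<le> f n" .
    have "1 \<le> real m powr p * real n powr (- p)"
      using False \<open>2 \<le> n\<close> \<open>p \<ge> 0\<close>
      by (simp add: powr_minus powr_divide[symmetric] divide_inverse[symmetric] ge_one_powr_ge_zero)
    then have "\<bar>f 2\<bar> \<le> \<bar>f 2\<bar> * (real m powr p * real n powr (- p))"
      by (simp add: mult_le_cancel_left1)
    moreover have "f n \<le> \<bar>f 2\<bar>" using antimono[OF order_refl \<open>2 \<le> n\<close>] by linarith
    ultimately have "f n \<le> \<bar>f 2\<bar> * (real m powr p * real n powr (- p))" by linarith
    also have "\<dots> \<le> C' * real n powr (- p)"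
      by (simp add: C'_def algebra_simps)
    finally show ?thesis using lower by simp
  qed
  ultimately show ?thesis by blast
qed

section \<open>Rescaled coordinates\<close>

locale unipotent_flag_basis =
  fixes A :: "real^'n^'n" and e :: "'n \<Rightarrow> real^'n" and \<omega> :: "'n \<Rightarrow> nat"
  assumes unipotent: "matpow (mat 1 - A) CARD('n) = 0"
    and inj_e: "inj e" and independent_e: "independent (range e)" and span_e: "span (range e) = UNIV"
    and matpow_kills_e: "\<And>i. matpow (mat 1 - A) (Suc (\<omega> i)) *v e i = 0"
    and weight_less_card: "\<And>i. \<omega> i < CARD('n)"
    and kernel_subset_span: "\<And>j. {x. matpow (mat 1 - A) j *v x = 0} \<subseteq> span (e ` {i. \<omega> i < j})"
begin

abbreviation N :: "real^'n^'n" where "N \<equiv> mat 1 - A"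

lemma matpow_N_e: "\<omega> i < j \<Longrightarrow> matpow N j *v e i = 0"
  using matpow_add_mult[of N "j - Suc (\<omega> i)" "Suc (\<omega> i)" "e i"] matpow_kills_e by simp

lemma matpow_A_expansion:
  "matpow A k *v x = (\<Sum>j<CARD('n). ((-1)^j * real (k choose j)) *\<^sub>R (matpow N j *v x))"
  using matpow_unipotent_expansion[OF unipotent, of k x] by simp

definition comb :: "real^'n \<Rightarrow> real^'n" where
  "comb c = (\<Sum>i\<in>UNIV. c $ i *\<^sub>R e i)"

lemma linear_comb: "linear comb"
  by (auto simp: comb_def linear_iff sum.distrib scaleR_add_left scaleR_sum_right)

lemma matpow_comb: "matpow M k *v comb c = (\<Sum>i\<in>UNIV. c $ i *\<^sub>R (matpow M k *v e i))"
  by (simp add: comb_def linear_sum[OF matrix_vector_mul_linear] matrix_vector_mult_scaleR)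

lemma comb_eq_0: "comb c = 0 \<Longrightarrow> c = 0"
proof -
  assume "comb c = 0"
  define u where "u y = c $ inv e y" for y
  have "(\<Sum>y\<in>range e. u y *\<^sub>R y) = comb c"
    by (simp add: sum.reindex[OF inj_e] u_def inv_f_f[OF inj_e] comb_def)
  then have "\<forall>y\<in>range e. u y = 0"
    using independent_e \<open>comb c = 0\<close> dependent_finite[of "range e"] by auto
  then show "c = 0" by (simp add: u_def vec_eq_iff inv_f_f[OF inj_e])
qed

lemma span_image_e_comb:
  assumes "x \<in> span (e ` J)"
  obtains c where "x = comb c" and "\<And>i. i \<notin> J \<Longrightarrow> c $ i = 0"
proof -
  have "inj_on e J" using inj_e by (rule inj_on_subset) simp
  have "x \<in> range (\<lambda>u. \<Sum>y\<in>e ` J. u y *\<^sub>R y)"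
    using assms span_finite[of "e ` J"] by simp
  then obtain u where "x = (\<Sum>y\<in>e ` J. u y *\<^sub>R y)" by blast
  also have "\<dots> = (\<Sum>i\<in>J. u (e i) *\<^sub>R e i)" by (simp add: sum.reindex[OF \<open>inj_on e J\<close>])
  also have "\<dots> = comb (\<chi> i. if i \<in> J then u (e i) else 0)"
    unfolding comb_def by (rule sum.mono_neutral_cong_left) auto
  finally show ?thesis by (rule that) simp
qed

lemma comb_surj: obtains c where "x = comb c"
  using span_image_e_comb[of x UNIV] span_e by auto

lemma matpow_N_comb_eq_0:
  assumes "matpow N k *v comb c = 0" and "k \<le> \<omega> i"
  shows "c $ i = 0"
proof -
  have "comb c \<in> span (e ` {i. \<omega> i < k})" using kernel_subset_span[of k] assms(1) by blast
  then obtain a where a: "comb c = comb a" and "\<And>i. \<omega> i \<ge> k \<Longrightarrow> a $ i = 0"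
    by (rule span_image_e_comb) auto
  have "comb (c - a) = 0" using a linear_diff[OF linear_comb] by simp
  then have "c = a" using comb_eq_0[of "c - a"] by simp
  then show ?thesis using \<open>\<And>i. \<omega> i \<ge> k \<Longrightarrow> a $ i = 0\<close> assms(2) by simp
qed

lemma rank_matpow_N: "dim (range (\<lambda>x. matpow N k *v x)) = card {i. k \<le> \<omega> i}"
proof -
  define I where "I = {i. k \<le> \<omega> i}"
  have range_eq: "range (\<lambda>x. matpow N k *v x) = (\<lambda>x. matpow N k *v x) ` span (e ` I)"
  proof
    show "range (\<lambda>x. matpow N k *v x) \<subseteq> (\<lambda>x. matpow N k *v x) ` span (e ` I)"
    proof clarify
      fix x
      obtain c where "x = comb c" by (rule comb_surj)
      define c' where "c' = (\<chi> i. if i \<in> I then c $ i else 0)"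
      have "matpow N k *v x = matpow N k *v comb c'"
        unfolding \<open>x = comb c\<close> matpow_comb using matpow_N_e
        by (intro sum.cong) (auto simp: c'_def I_def not_le)
      moreover have "comb c' \<in> span (e ` I)"
        unfolding comb_def
      proof (rule span_sum)
        fix i
        show "c' $ i *\<^sub>R e i \<in> span (e ` I)"
          by (cases "i \<in> I") (simp_all add: c'_def span_base span_scale span_zero)
      qed
      ultimately show "matpow N k *v x \<in> (\<lambda>x. matpow N k *v x) ` span (e ` I)" by blast
    qed
  qed blast
  have "inj_on (\<lambda>x. matpow N k *v x) (span (e ` I))"
  proof (rule linear_inj_on_iff_eq_0[THEN iffD2, OF matrix_vector_mul_linear subspace_span], intro ballI impI)
    fix y assume "y \<in> span (e ` I)" "matpow N k *v y = 0"
    obtain a where "y = comb a" "\<And>i. i \<notin> I \<Longrightarrow> a $ i = 0"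
      using \<open>y \<in> span (e ` I)\<close> by (rule span_image_e_comb) auto
    have "a $ i = 0" for i
      using matpow_N_comb_eq_0[of k a i] \<open>matpow N k *v y = 0\<close> \<open>y = comb a\<close>
        \<open>\<And>i. i \<notin> I \<Longrightarrow> a $ i = 0\<close> by (cases "i \<in> I") (simp_all add: I_def)
    then have "a = 0" by (simp add: vec_eq_iff)
    then show "y = 0" by (simp add: \<open>y = comb a\<close> comb_def)
  qed
  then have "dim (range (\<lambda>x. matpow N k *v x)) = dim (span (e ` I))"
    unfolding range_eq by (intro dim_image_eq matrix_vector_mul_linear) (simp add: span_span)
  also have "\<dots> = card (e ` I)"
    using independent_mono[OF independent_e image_mono[OF subset_UNIV]]
    by (rule dim_span_eq_card_independent)
  also have "\<dots> = card I" by (rule card_image[OF inj_on_subset[OF inj_e subset_UNIV]])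
  finally show ?thesis by (simp add: I_def)
qed

lemma sum_rank_matpow_N:
  "(\<Sum>k = 1..CARD('n) - 1. dim (range (\<lambda>x. matpow N k *v x))) = (\<Sum>i\<in>UNIV. \<omega> i)"
proof -
  have "(\<Sum>k = 1..CARD('n) - 1. dim (range (\<lambda>x. matpow N k *v x)))
      = (\<Sum>k = 1..CARD('n) - 1. \<Sum>i\<in>UNIV. if k \<le> \<omega> i then 1 else 0)"
    by (simp add: rank_matpow_N sum.If_cases)
  also have "\<dots> = (\<Sum>i\<in>UNIV. \<Sum>k = 1..CARD('n) - 1. if k \<le> \<omega> i then 1 else 0)"
    by (rule sum.swap)
  also have "\<dots> = (\<Sum>i\<in>UNIV. \<omega> i)"
  proof (intro sum.cong refl)
    fix i
    have "{k\<in>{1..CARD('n) - 1}. k \<le> \<omega> i} = {1..\<omega> i}" using weight_less_card[of i] by auto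
    then show "(\<Sum>k = 1..CARD('n) - 1. if k \<le> \<omega> i then 1 else 0) = \<omega> i"
      by (simp add: sum.If_cases Int_def)
  qed
  finally show ?thesis .
qed


definition rescaled :: "nat \<Rightarrow> real^'n \<Rightarrow> real^'n" where
  "rescaled n \<eta> = comb (\<chi> i. \<eta> $ i / real n ^ \<omega> i)"

definition orbit_bound :: real where
  "orbit_bound = (\<Sum>i\<in>UNIV. \<Sum>j<CARD('n). norm (matpow N j *v e i))"

lemma norm_matpow_N_e_le: "norm (matpow N j *v e i) \<le> orbit_bound"
proof (cases "j < CARD('n)")
  case True
  have "norm (matpow N j *v e i) \<le> (\<Sum>j<CARD('n). norm (matpow N j *v e i))"
    using True by (intro member_le_sum) auto
  also have "\<dots> \<le> orbit_bound" unfolding orbit_bound_def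
    by (rule member_le_sum[where f="\<lambda>i. \<Sum>j<CARD('n). norm (matpow N j *v e i)"]) (auto intro: sum_nonneg)
  finally show ?thesis .
next
  case False
  then show ?thesis
    using matpow_eq_0_ge[OF unipotent] by (simp add: orbit_bound_def sum_nonneg)
qed

lemma orbit_bound_nonneg: "orbit_bound \<ge> 0"
  by (simp add: orbit_bound_def sum_nonneg)

lemma norm_matpow_A_e:
  assumes "k < n"
  shows "norm (matpow A k *v e i) \<le> real n ^ \<omega> i * (real CARD('n) * orbit_bound)"
proof -
  have "norm (((-1)^j * real (k choose j)) *\<^sub>R (matpow N j *v e i)) \<le> real n ^ \<omega> i * orbit_bound" for j
  proof (cases "\<omega> i < j")
    case True
    then show ?thesis using matpow_N_e orbit_bound_nonneg by simp
  next
    case False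
    have "k choose j \<le> k ^ j" by (cases "j \<le> k") (auto simp: binomial_le_pow binomial_eq_0)
    then have "real (k choose j) \<le> real k ^ j" by (metis of_nat_le_iff of_nat_power)
    also have "\<dots> \<le> real n ^ j" using assms by (intro power_mono) auto
    also have "\<dots> \<le> real n ^ \<omega> i" using assms False by (intro power_increasing) auto
    finally show ?thesis
      using norm_matpow_N_e_le[of j i] by (simp add: abs_mult mult_mono)
  qed
  then have "norm (matpow A k *v e i) \<le> (\<Sum>j<CARD('n). real n ^ \<omega> i * orbit_bound)"
    unfolding matpow_A_expansion by (intro order.trans[OF norm_sum] sum_mono)
  then show ?thesis by (simp add: mult.left_commute)
qed

lemma small_rescaled_in_W_set:
  obtains c where "c > 0" and "\<And>n \<eta>. 1 \<le> n \<Longrightarrow> norm \<eta> \<le> c \<Longrightarrow> rescaled n \<eta> \<in> W_set A n"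
proof
  define D where "D = real CARD('n) * real CARD('n) * orbit_bound"
  have "D \<ge> 0" using orbit_bound_nonneg by (simp add: D_def)
  show "1 / (D + 1) > 0" using \<open>D \<ge> 0\<close> by simp
  fix n :: nat and \<eta> :: "real^'n" assume "1 \<le> n" and \<eta>: "norm \<eta> \<le> 1 / (D + 1)"
  have "norm (matpow A k *v rescaled n \<eta>) \<le> 1" if "k < n" for k
  proof -
    have "norm (matpow A k *v rescaled n \<eta>)
        \<le> (\<Sum>i\<in>UNIV. \<bar>\<eta> $ i\<bar> / real n ^ \<omega> i * norm (matpow A k *v e i))"
      unfolding rescaled_def matpow_comb by (intro order.trans[OF norm_sum]) (simp add: abs_divide)
    also have "\<dots> \<le> (\<Sum>i\<in>UNIV. \<bar>\<eta> $ i\<bar> * (real CARD('n) * orbit_bound))"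
    proof (rule sum_mono)
      fix i
      have "\<bar>\<eta> $ i\<bar> / real n ^ \<omega> i * norm (matpow A k *v e i)
          \<le> \<bar>\<eta> $ i\<bar> / real n ^ \<omega> i * (real n ^ \<omega> i * (real CARD('n) * orbit_bound))"
        using norm_matpow_A_e[OF that] by (intro mult_left_mono) auto
      then show "\<bar>\<eta> $ i\<bar> / real n ^ \<omega> i * norm (matpow A k *v e i) \<le> \<bar>\<eta> $ i\<bar> * (real CARD('n) * orbit_bound)"
        using \<open>1 \<le> n\<close> by simp
    qed
    also have "\<dots> \<le> (\<Sum>i\<in>(UNIV::'n set). norm \<eta> * (real CARD('n) * orbit_bound))"
      using orbit_bound_nonneg by (intro sum_mono mult_right_mono component_le_norm_cart) auto
    also have "\<dots> = norm \<eta> * D" by (simp add: D_def)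
    also have "\<dots> \<le> D / (D + 1)"
      using mult_right_mono[OF \<eta> \<open>D \<ge> 0\<close>] by simp
    also have "\<dots> \<le> 1" using \<open>D \<ge> 0\<close> by simp
    finally show ?thesis .
  qed
  then show "rescaled n \<eta> \<in> W_set A n" by (simp add: W_set_def)
qed


definition level :: "nat \<Rightarrow> real^'n \<Rightarrow> real^'n" where
  "level w \<eta> = (\<chi> i. if \<omega> i = w then \<eta> $ i else 0)"

lemma sum_level: "(\<Sum>w<CARD('n). level w \<eta>) = \<eta>"
proof -
  have "(\<Sum>w<CARD('n). if \<omega> i = w then \<eta> $ i else 0) = \<eta> $ i" for i
    using weight_less_card[of i] by (simp add: sum.delta)
  then show ?thesis by (simp add: vec_eq_iff level_def)
qed

lemma level_lower_bound:
  obtains \<gamma> where "\<gamma> > 0" and "\<And>\<eta>. \<gamma> * norm (level w \<eta>) \<le> norm (matpow N w *v comb (level w \<eta>))"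
proof -
  define s where "s = {c::real^'n. \<forall>i. \<omega> i \<noteq> w \<longrightarrow> c $ i = 0}"
  have "closed s"
    unfolding s_def Collect_all_eq Collect_imp_eq
    by (intro closed_INT ballI closed_Un closed_Collect_eq) (auto intro: continuous_intros)
  moreover have "subspace s" by (auto simp: s_def subspace_def)
  moreover have "bounded_linear (\<lambda>c. matpow N w *v comb c)"
    using linear_compose[OF linear_comb matrix_vector_mul_linear]
    by (simp add: o_def linear_linear[symmetric])
  moreover have "\<forall>c\<in>s. matpow N w *v comb c = 0 \<longrightarrow> c = 0"
  proof (intro ballI impI)
    fix c assume "c \<in> s" "matpow N w *v comb c = 0"
    then have "c $ i = 0" for i
      using matpow_N_comb_eq_0[of w c i] by (cases "\<omega> i = w") (auto simp: s_def)
    then show "c = 0" by (simp add: vec_eq_iff)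
  qed
  ultimately obtain \<gamma> where "\<gamma> > 0" "\<forall>c\<in>s. \<gamma> * norm c \<le> norm (matpow N w *v comb c)"
    using injective_imp_isometric by blast
  moreover have "level w \<eta> \<in> s" for \<eta> by (simp add: s_def level_def)
  ultimately show ?thesis using that by blast
qed

lemma levels_lower_bound:
  obtains G where "G \<ge> 0"
    and "\<And>\<eta>. norm \<eta> \<le> G * (\<Sum>w<CARD('n). norm (matpow N w *v comb (level w \<eta>)))"
proof -
  define T where "T w \<eta> = norm (matpow N w *v comb (level w \<eta>))" for w \<eta>
  have "\<forall>w. \<exists>\<gamma>. \<gamma> > 0 \<and> (\<forall>\<eta>. \<gamma> * norm (level w \<eta>) \<le> T w \<eta>)"
  proof
    fix w
    obtain \<gamma> where "\<gamma> > 0" "\<And>\<eta>. \<gamma> * norm (level w \<eta>) \<le> T w \<eta>"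
      unfolding T_def by (rule level_lower_bound[of w]) blast
    then show "\<exists>\<gamma>. \<gamma> > 0 \<and> (\<forall>\<eta>. \<gamma> * norm (level w \<eta>) \<le> T w \<eta>)" by blast
  qed
  then obtain \<gamma> where \<gamma>: "\<And>w. \<gamma> w > 0" "\<And>w \<eta>. \<gamma> w * norm (level w \<eta>) \<le> T w \<eta>"
    by metis
  define G where "G = (\<Sum>w<CARD('n). 1 / \<gamma> w)"
  show ?thesis
  proof
    show "G \<ge> 0" using \<gamma>(1) by (simp add: G_def sum_nonneg less_imp_le)
    fix \<eta> :: "real^'n"
    have "norm \<eta> \<le> (\<Sum>w<CARD('n). norm (level w \<eta>))"
      by (subst (1) sum_level[symmetric]) (rule norm_sum)
    also have "\<dots> \<le> (\<Sum>w<CARD('n). G * T w \<eta>)"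
    proof (rule sum_mono)
      fix w assume "w \<in> {..<CARD('n)}"
      have "1 / \<gamma> w \<le> G"
        unfolding G_def using \<open>w \<in> {..<CARD('n)}\<close> \<gamma>(1) by (intro member_le_sum) (auto simp: less_imp_le)
      then have "1 / \<gamma> w * T w \<eta> \<le> G * T w \<eta>" by (rule mult_right_mono) (simp add: T_def)
      moreover have "norm (level w \<eta>) \<le> 1 / \<gamma> w * T w \<eta>"
        using \<gamma>(1)[of w] \<gamma>(2)[of w \<eta>] by (simp add: field_simps)
      ultimately show "norm (level w \<eta>) \<le> G * T w \<eta>" by linarith
    qed
    finally show "norm \<eta> \<le> G * (\<Sum>w<CARD('n). norm (matpow N w *v comb (level w \<eta>)))"
      by (simp add: T_def sum_distrib_left)
  qed
qed

text \<open>After multiplication by \<open>n^w\<close>, the component of \<open>N^w (rescaled n \<eta>)\<close> coming from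
  vectors of weight \<open>w\<close> survives, while the vectors of larger weight contribute \<open>O(1/n)\<close>.\<close>

lemma level_approx:
  assumes "1 \<le> n"
  shows "norm (matpow N w *v comb (level w \<eta>))
    \<le> real n ^ w * norm (matpow N w *v rescaled n \<eta>) + real CARD('n) * orbit_bound * norm \<eta> / real n"
proof -
  define v where "v i = matpow N w *v e i" for i
  define t where "t i = (\<eta> $ i * real n ^ w / real n ^ \<omega> i - level w \<eta> $ i) *\<^sub>R v i" for i
  have n: "real n > 0" using assms by simp
  have "matpow N w *v comb (level w \<eta>) = (\<Sum>i\<in>UNIV. real n ^ w *\<^sub>R ((\<eta> $ i / real n ^ \<omega> i) *\<^sub>R v i) - t i)"
    unfolding matpow_comb v_def t_def by (intro sum.cong) (auto simp: algebra_simps)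
  also have "\<dots> = real n ^ w *\<^sub>R (matpow N w *v rescaled n \<eta>) - (\<Sum>i\<in>UNIV. t i)"
    by (simp add: rescaled_def matpow_comb v_def sum_subtractf scaleR_sum_right)
  finally have split: "matpow N w *v comb (level w \<eta>) = real n ^ w *\<^sub>R (matpow N w *v rescaled n \<eta>) - (\<Sum>i\<in>UNIV. t i)" .
  have t_bound: "norm (t i) \<le> \<bar>\<eta> $ i\<bar> * orbit_bound / real n" for i
  proof (cases "w < \<omega> i")
    case True
    have "real n * real n ^ w \<le> real n ^ \<omega> i"
      using power_increasing[of "Suc w" "\<omega> i" "real n"] True assms by simp
    then have "real n ^ w / real n ^ \<omega> i \<le> 1 / real n"
      using n by (simp add: field_simps)
    then have "\<bar>\<eta> $ i\<bar> * (real n ^ w / real n ^ \<omega> i) * norm (v i) \<le> \<bar>\<eta> $ i\<bar> * (1 / real n) * orbit_bound"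
      using norm_matpow_N_e_le[of w i] orbit_bound_nonneg unfolding v_def
      by (intro mult_mono mult_left_mono) auto
    then show ?thesis using True by (simp add: t_def level_def abs_mult)
  next
    case False
    then have "t i = 0"
      using n matpow_N_e[of i w] by (cases "\<omega> i = w") (auto simp: t_def v_def level_def)
    then show ?thesis using orbit_bound_nonneg by simp
  qed
  have "norm (\<Sum>i\<in>UNIV. t i) \<le> (\<Sum>i\<in>(UNIV::'n set). norm \<eta> * orbit_bound / real n)"
    using orbit_bound_nonneg n
    by (intro order.trans[OF norm_sum] sum_mono order.trans[OF t_bound] divide_right_mono
        mult_right_mono component_le_norm_cart) auto
  also have "\<dots> = real CARD('n) * orbit_bound * norm \<eta> / real n" by simp
  finally have sum_t: "norm (\<Sum>i\<in>UNIV. t i) \<le> real CARD('n) * orbit_bound * norm \<eta> / real n" .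
  have "norm (matpow N w *v comb (level w \<eta>))
      \<le> norm (real n ^ w *\<^sub>R (matpow N w *v rescaled n \<eta>)) + norm (\<Sum>i\<in>UNIV. t i)"
    unfolding split by (rule norm_triangle_ineq4)
  then show ?thesis using sum_t by simp
qed


text \<open>The vectors \<open>(-1)^j N^j \<xi>\<close> are the coefficients of \<open>k \<mapsto> A^k \<xi>\<close> in the basis of
  binomial polynomials \<open>k choose j\<close>.\<close>

lemma W_set_matpow_N_bound:
  obtains K n0 where
    "\<And>n \<xi> j. n0 \<le> n \<Longrightarrow> \<xi> \<in> W_set A n \<Longrightarrow> j < CARD('n) \<Longrightarrow> norm (matpow N j *v \<xi>) \<le> K / real n ^ j"
proof -
  obtain K n0 where sampling: "\<And>n x. n0 \<le> n \<Longrightarrow>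
      \<forall>k. 1 \<le> k \<and> k < n \<longrightarrow> norm (\<Sum>j<CARD('n). real (k choose j) *\<^sub>R x j) \<le> 1 \<Longrightarrow>
      \<forall>j<CARD('n). norm (x j :: real^'n) \<le> K / real n ^ j"
    using vector_binomial_sum_sampling_bound[where 'n='n, of "CARD('n)"] by blast
  show ?thesis
  proof (rule that)
    fix n \<xi> j assume "n0 \<le> n" "\<xi> \<in> W_set A n" "j < CARD('n)"
    define x where "x j = ((-1)^j) *\<^sub>R (matpow N j *v \<xi>)" for j
    have "(\<Sum>j<CARD('n). real (k choose j) *\<^sub>R x j) = matpow A k *v \<xi>" for k
      by (simp add: matpow_A_expansion x_def mult.commute)
    then have "norm (x j) \<le> K / real n ^ j"
      using sampling[OF \<open>n0 \<le> n\<close>] \<open>\<xi> \<in> W_set A n\<close> \<open>j < CARD('n)\<close> by (simp add: W_set_def)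
    then show "norm (matpow N j *v \<xi>) \<le> K / real n ^ j" by (simp add: x_def)
  qed
qed

lemma W_set_subset_rescaled:
  obtains C n0 where "\<And>n. n0 \<le> n \<Longrightarrow> W_set A n \<subseteq> rescaled n ` cball 0 C"
proof -
  obtain K n0 where N_bound: "\<And>n \<xi> j. n0 \<le> n \<Longrightarrow> \<xi> \<in> W_set A n \<Longrightarrow> j < CARD('n) \<Longrightarrow>
      norm (matpow N j *v \<xi>) \<le> K / real n ^ j"
    by (rule W_set_matpow_N_bound) blast
  obtain G where "G \<ge> 0"
    and G: "\<And>\<eta>. norm \<eta> \<le> G * (\<Sum>w<CARD('n). norm (matpow N w *v comb (level w \<eta>)))"
    by (rule levels_lower_bound) blast
  define d where "d = real CARD('n)"
  define n1 where "n1 = max (max n0 1) (nat \<lceil>2 * G * d * d * orbit_bound\<rceil>)"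
  show ?thesis
  proof (rule that[of n1 "2 * G * d * K"], rule subsetI)
    fix n \<xi> assume "n1 \<le> n" and \<xi>: "\<xi> \<in> W_set A n"
    then have "1 \<le> n" "n0 \<le> n" "2 * G * d * d * orbit_bound \<le> real n"
      by (auto simp: n1_def)
    then have n: "real n > 0" by simp
    obtain c where "\<xi> = comb c" by (rule comb_surj)
    define \<eta> where "\<eta> = (\<chi> i. c $ i * real n ^ \<omega> i)"
    have "rescaled n \<eta> = \<xi>" using n by (simp add: rescaled_def \<eta>_def \<open>\<xi> = comb c\<close>)
    have "norm (matpow N w *v comb (level w \<eta>)) \<le> K + d * orbit_bound * norm \<eta> / real n"
      if "w < CARD('n)" for w
    proof -
      have "real n ^ w * norm (matpow N w *v \<xi>) \<le> K"
        using N_bound[OF \<open>n0 \<le> n\<close> \<xi> that] n by (simp add: field_simps)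
      then show ?thesis
        using level_approx[OF \<open>1 \<le> n\<close>, of w \<eta>] \<open>rescaled n \<eta> = \<xi>\<close> by (simp add: d_def)
    qed
    then have "G * (\<Sum>w<CARD('n). norm (matpow N w *v comb (level w \<eta>)))
        \<le> G * (\<Sum>w<CARD('n). K + d * orbit_bound * norm \<eta> / real n)"
      using \<open>G \<ge> 0\<close> by (intro mult_left_mono sum_mono) auto
    with G[of \<eta>] have "norm \<eta> \<le> G * (\<Sum>w<CARD('n). K + d * orbit_bound * norm \<eta> / real n)"
      by linarith
    also have "\<dots> = G * d * K + (2 * G * d * d * orbit_bound) * norm \<eta> / (2 * real n)"
      by (simp add: d_def field_simps)
    also have "\<dots> \<le> G * d * K + real n * norm \<eta> / (2 * real n)"
      using \<open>2 * G * d * d * orbit_bound \<le> real n\<close> n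
      by (intro add_left_mono divide_right_mono mult_right_mono) auto
    also have "\<dots> = G * d * K + norm \<eta> / 2" using n by simp
    finally have "norm \<eta> \<le> 2 * G * d * K" by linarith
    then show "\<xi> \<in> rescaled n ` cball 0 (2 * G * d * K)"
      using \<open>rescaled n \<eta> = \<xi>\<close> by auto
  qed
qed

lemma linear_rescaled: "linear (rescaled n)"
  unfolding rescaled_def
  by (rule linear_compose[OF _ linear_comb, unfolded o_def]) (auto simp: linear_iff vec_eq_iff add_divide_distrib)

lemma measure_rescaled_cball:
  obtains c where "c > 0"
    and "\<And>n r. 1 \<le> n \<Longrightarrow> measure lebesgue (rescaled n ` cball 0 r)
           = c / real n ^ (\<Sum>i\<in>UNIV. \<omega> i) * measure lebesgue (cball (0::real^'n) r)"
proof -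
  have "inj comb" using comb_eq_0 linear_comb by (simp add: linear_injective_0)
  then obtain c where "c > 0"
    and scaling: "\<And>S. compact S \<Longrightarrow> measure lebesgue (comb ` S) = c * measure lebesgue S"
    using linear_image_measure_scaling[OF linear_comb] by blast
  show ?thesis
  proof (rule that[OF \<open>c > 0\<close>])
    fix n :: nat and r :: real assume "1 \<le> n"
    define m where "m i = 1 / real n ^ \<omega> i" for i
    define stretch where "stretch x = (\<chi> k. m k * x $ k)" for x :: "real^'n"
    have "linear stretch" by (auto simp: stretch_def linear_iff vec_eq_iff algebra_simps)
    have "rescaled n ` cball 0 r = comb ` stretch ` cball 0 r"
      by (simp add: image_comp o_def rescaled_def stretch_def m_def)
    moreover have "compact (stretch ` cball 0 r)"
      using \<open>linear stretch\<close>
      by (intro compact_continuous_image linear_continuous_on) (simp_all add: linear_linear)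
    moreover have "measure lebesgue (stretch ` cball 0 r) = \<bar>prod m UNIV\<bar> * measure lebesgue (cball (0::real^'n) r)"
      unfolding stretch_def by (rule measure_stretch) simp
    moreover have "\<bar>prod m UNIV\<bar> = 1 / real n ^ (\<Sum>i\<in>UNIV. \<omega> i)"
      using \<open>1 \<le> n\<close> by (simp add: m_def prod_dividef power_sum abs_prod)
    ultimately show "measure lebesgue (rescaled n ` cball 0 r)
        = c / real n ^ (\<Sum>i\<in>UNIV. \<omega> i) * measure lebesgue (cball (0::real^'n) r)"
      using scaling by simp
  qed
qed

lemma measure_W_set_eventually:
  obtains a b n1 where "a > 0"
    and "\<And>n. n1 \<le> n \<Longrightarrow> a * real n powr (- real (\<Sum>i\<in>UNIV. \<omega> i)) \<le> measure lebesgue (W_set A n)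
             \<and> measure lebesgue (W_set A n) \<le> b * real n powr (- real (\<Sum>i\<in>UNIV. \<omega> i))"
proof -
  define p where "p = (\<Sum>i\<in>UNIV. \<omega> i)"
  obtain c0 where "c0 > 0" and small: "\<And>n \<eta>. 1 \<le> n \<Longrightarrow> norm \<eta> \<le> c0 \<Longrightarrow> rescaled n \<eta> \<in> W_set A n"
    by (rule small_rescaled_in_W_set) blast
  obtain C n0 where big: "\<And>n. n0 \<le> n \<Longrightarrow> W_set A n \<subseteq> rescaled n ` cball 0 C"
    by (rule W_set_subset_rescaled) blast
  obtain c where "c > 0" and measure_image: "\<And>n r. 1 \<le> n \<Longrightarrow> measure lebesgue (rescaled n ` cball 0 r)
           = c / real n ^ p * measure lebesgue (cball (0::real^'n) r)"
    unfolding p_def by (rule measure_rescaled_cball) blast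
  have compact_image: "compact (rescaled n ` cball 0 r)" for n r
    using linear_rescaled
    by (intro compact_continuous_image linear_continuous_on) (auto simp: linear_linear[symmetric])
  show ?thesis
  proof (rule that[of "c * measure lebesgue (cball (0::real^'n) c0)" "max n0 2"
        "c * measure lebesgue (cball (0::real^'n) C)"])
    show "c * measure lebesgue (cball (0::real^'n) c0) > 0" using \<open>c > 0\<close> \<open>c0 > 0\<close> by simp
    fix n assume "max n0 2 \<le> n"
    then have "n0 \<le> n" "1 \<le> n" "2 \<le> n" by auto
    have W: "compact (W_set A n)"
      using compact_W_set[OF unipotent_kernel_trivial[OF unipotent] \<open>2 \<le> n\<close>] .
    have "rescaled n ` cball 0 c0 \<subseteq> W_set A n" using small[OF \<open>1 \<le> n\<close>] by auto
    then have "measure lebesgue (rescaled n ` cball 0 c0) \<le> measure lebesgue (W_set A n)"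
      using W compact_image by (intro measure_mono_fmeasurable fmeasurableD lmeasurable_compact)
    moreover have "measure lebesgue (W_set A n) \<le> measure lebesgue (rescaled n ` cball 0 C)"
      using big[OF \<open>n0 \<le> n\<close>] W compact_image
      by (intro measure_mono_fmeasurable fmeasurableD lmeasurable_compact)
    moreover have "real n powr (- real p) = 1 / real n ^ p"
      using \<open>1 \<le> n\<close> by (simp add: powr_minus powr_realpow divide_inverse)
    ultimately show "c * measure lebesgue (cball (0::real^'n) c0) * real n powr (- real (\<Sum>i\<in>UNIV. \<omega> i))
          \<le> measure lebesgue (W_set A n) \<and>
        measure lebesgue (W_set A n) \<le> c * measure lebesgue (cball (0::real^'n) C) * real n powr (- real (\<Sum>i\<in>UNIV. \<omega> i))"
      using measure_image[OF \<open>1 \<le> n\<close>] by (simp add: p_def)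
  qed
qed

end

theorem proposition4p5:
  fixes A :: "real^'d^'d"
  assumes unipotent: "matpow (mat 1 - A) CARD('d) = 0"
  defines "p \<equiv> (\<Sum>k = 1..CARD('d) - 1. dim (range (\<lambda>x. matpow (mat 1 - A) k *v x)))"
  shows "\<exists>C C'. C > 0 \<and> C' > 0 \<and>
           (\<forall>n::nat. n \<ge> 2 \<longrightarrow>
              C * real n powr (- real p) \<le> measure lebesgue (W_set A n) \<and>
              measure lebesgue (W_set A n) \<le> C' * real n powr (- real p))"
proof -
  obtain e \<omega> where "unipotent_flag_basis A e \<omega>"
    using kernel_flag_basis[OF unipotent] unipotent unfolding unipotent_flag_basis_def by metis
  then interpret unipotent_flag_basis A e \<omega> .
  have "p = (\<Sum>i\<in>UNIV. \<omega> i)" unfolding p_def by (rule sum_rank_matpow_N)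
  obtain a b n1 where "a > 0" and eventual: "\<And>n. n1 \<le> n \<Longrightarrow>
      a * real n powr (- real p) \<le> measure lebesgue (W_set A n) \<and>
      measure lebesgue (W_set A n) \<le> b * real n powr (- real p)"
    unfolding \<open>p = _\<close> by (rule measure_W_set_eventually) blast
  show ?thesis
    using power_bounds_from_eventual[OF measure_W_set_antimono[OF unipotent_kernel_trivial[OF unipotent]]
        _ \<open>a > 0\<close> eventual]
    by simp
qed

end
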